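(* Let $R$ be a finite group of squarefree order. If $R$ is abelian of composite order, or $R\cong \mathrm{D}_{2r}\times\mathrm{C}_q$ with $r\in\{3,5\}$ and $q$ a prime, then $R$ is not DRR-detecting.
   Context: $\mathrm{C}_n$ is the cyclic group of order $n$, $\mathrm{D}_{2n}$ the dihedral group of order $2n$. For a group $R$ and $S\subseteq R$, the Cayley digraph $\mathrm{Cay}(R,S)$ has vertex set $R$ and an arc from $r$ to $sr$ whenever $s\in S$. It is a DRR if $\mathrm{Aut}(\mathrm{Cay}(R,S))$ equals the right regular representation $\hat R$. $\mathrm{Aut}(R)_S$ is the group of automorphisms of $R$ fixing $S$ setwise. $R$ is DRR-detecting if for every $S\subseteq R$, $\mathrm{Aut}(R)_S=1$ implies $\mathrm{Cay}(R,S)$ is a DRR. *)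

theory Defs
  imports "HOL-Algebra.Algebra" "HOL-Computational_Algebra.Squarefree"
begin

definition cyclic_group :: "nat \<Rightarrow> int monoid" where
  "cyclic_group n = integer_mod_group n"

text \<open>Dihedral group of order 2n: pairs (a,i) with a in Z/n, i in Z/2, representing
  rotation^a reflection^i, with (a,i)(b,j) = (a + (-1)^i b, i + j).\<close>
definition dihedral_group :: "nat \<Rightarrow> (int \<times> int) monoid" where
  "dihedral_group n =
     \<lparr>carrier = {0..<int n} \<times> {0..<2},
      monoid.mult = (\<lambda>(a,i) (b,j). ((a + (-1)^nat i * b) mod int n, (i + j) mod 2)),
      one = (0, 0)\<rparr>"

text \<open>Automorphisms of the Cayley digraph Cay(R,S): permutations of the vertex set R
  (extensional) preserving arcs r \<rightarrow> s r (s \<in> S) in both directions.\<close>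
definition cay_aut :: "('a, 'b) monoid_scheme \<Rightarrow> 'a set \<Rightarrow> ('a \<Rightarrow> 'a) set" where
  "cay_aut R S = {f \<in> Bij (carrier R).
      \<forall>x\<in>carrier R. \<forall>y\<in>carrier R.
        ((\<exists>s\<in>S. y = s \<otimes>\<^bsub>R\<^esub> x) \<longleftrightarrow> (\<exists>s\<in>S. f y = s \<otimes>\<^bsub>R\<^esub> f x))}"

definition right_regular :: "('a, 'b) monoid_scheme \<Rightarrow> ('a \<Rightarrow> 'a) set" where
  "right_regular R = {(\<lambda>x\<in>carrier R. x \<otimes>\<^bsub>R\<^esub> g) | g. g \<in> carrier R}"

definition is_DRR :: "('a, 'b) monoid_scheme \<Rightarrow> 'a set \<Rightarrow> bool" where
  "is_DRR R S \<longleftrightarrow> cay_aut R S = right_regular R"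

definition aut_stab :: "('a, 'b) monoid_scheme \<Rightarrow> 'a set \<Rightarrow> ('a \<Rightarrow> 'a) set" where
  "aut_stab R S = {\<phi> \<in> auto R. \<phi> ` S = S}"

definition DRR_detecting :: "('a, 'b) monoid_scheme \<Rightarrow> bool" where
  "DRR_detecting R \<longleftrightarrow>
     (\<forall>S. S \<subseteq> carrier R \<longrightarrow> aut_stab R S = {(\<lambda>x\<in>carrier R. x)} \<longrightarrow> is_DRR R S)"

end

theory Submission
  imports Defs
begin

(* Both families of groups R contain a central element c of order q > 1 and a set K such that
   c and K generate R, every x \<in> K is nontrivial of order coprime to q, and ord y does not
   divide q ord x for distinct x, y \<in> K.  Put S = {c} \<union> K<c>.

   Comparing orders, every automorphism of R that fixes S fixes c and each x \<in> K, hence is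
   trivial.  On the other hand S - <c> is a union of cosets of the central subgroup <c>, so
   right-multiplying a single coset of <c> by c is an automorphism of Cay(R,S) that fixes the
   identity without being trivial; thus Cay(R,S) is not a DRR.

   For R abelian of squarefree order p m (p prime, m > 1), R is cyclic, c has order p and K
   consists of one element of order m.  For D_2r \<times> C_q, c generates C_q and K consists of a
   rotation and a reflection. *)

lemma (in group) arc_iff_mult_inv_mem:
  assumes "S \<subseteq> carrier G" "x \<in> carrier G" "y \<in> carrier G"
  shows "(\<exists>s\<in>S. y = s \<otimes> x) \<longleftrightarrow> y \<otimes> inv x \<in> S"
proof
  assume "\<exists>s\<in>S. y = s \<otimes> x"
  then obtain s where "s \<in> S" "y = s \<otimes> x" by blast
  then show "y \<otimes> inv x \<in> S" using assms by (simp add: m_assoc subsetD)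
next
  assume "y \<otimes> inv x \<in> S"
  moreover have "y = (y \<otimes> inv x) \<otimes> x" using assms by (simp add: m_assoc)
  ultimately show "\<exists>s\<in>S. y = s \<otimes> x" by blast
qed

lemma (in group) mult_mem_iff_of_coset_closed:
  assumes N: "subgroup N G"
    and S_N: "\<And>s n. s \<in> S - N \<Longrightarrow> n \<in> N \<Longrightarrow> s \<otimes> n \<in> S"
    and z: "z \<in> carrier G" "z \<notin> N" and n: "n \<in> N"
  shows "z \<otimes> n \<in> S \<longleftrightarrow> z \<in> S"
proof
  interpret N: subgroup N G by fact
  have n_carrier: "n \<in> carrier G" using n by (rule N.mem_carrier)
  assume zn: "z \<otimes> n \<in> S"
  have "z \<otimes> n \<notin> N"
  proof
    assume "z \<otimes> n \<in> N"
    then have "z \<otimes> n \<otimes> inv n \<in> N" using n by blast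
    then show False using z n_carrier by (simp add: m_assoc)
  qed
  then have "z \<otimes> n \<otimes> inv n \<in> S" using S_N zn n by blast
  then show "z \<in> S" using z n_carrier by (simp add: m_assoc)
next
  assume "z \<in> S"
  then show "z \<otimes> n \<in> S" using S_N z n by blast
qed

lemma (in group) twist_Bij:
  assumes N: "subgroup N G" and \<tau>: "\<tau> \<in> carrier G \<rightarrow> N"
    and \<tau>_shift: "\<And>x n. x \<in> carrier G \<Longrightarrow> n \<in> N \<Longrightarrow> \<tau> (x \<otimes> n) = \<tau> x"
  shows "(\<lambda>x\<in>carrier G. x \<otimes> \<tau> x) \<in> Bij (carrier G)"
proof -
  interpret N: subgroup N G by fact
  have \<tau>_N: "\<tau> x \<in> N" "inv (\<tau> x) \<in> N" if "x \<in> carrier G" for x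
    using \<tau> that by auto
  then have \<tau>_carrier: "\<tau> x \<in> carrier G" "inv (\<tau> x) \<in> carrier G" if "x \<in> carrier G" for x
    using that by auto
  have "bij_betw (\<lambda>x\<in>carrier G. x \<otimes> \<tau> x) (carrier G) (carrier G)"
    by (rule bij_betw_byWitness[where f' = "\<lambda>x\<in>carrier G. x \<otimes> inv (\<tau> x)"])
      (use \<tau>_N \<tau>_carrier \<tau>_shift in \<open>auto simp: m_assoc\<close>)
  then show ?thesis by (simp add: Bij_def)
qed

text \<open>Twisting the identity by a function \<open>\<tau>\<close> into a central subgroup \<open>N\<close> that is constant on
  the cosets of \<open>N\<close> changes each quotient \<open>y \<otimes> inv x\<close> only by a factor from \<open>N\<close>, and not at all
  when \<open>x\<close> and \<open>y\<close> lie in the same coset.\<close>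

lemma (in group) central_twist_in_cay_aut:
  assumes N: "subgroup N G"
    and central: "\<And>n x. n \<in> N \<Longrightarrow> x \<in> carrier G \<Longrightarrow> n \<otimes> x = x \<otimes> n"
    and S: "S \<subseteq> carrier G" and S_N: "\<And>s n. s \<in> S - N \<Longrightarrow> n \<in> N \<Longrightarrow> s \<otimes> n \<in> S"
    and \<tau>: "\<tau> \<in> carrier G \<rightarrow> N"
    and \<tau>_coset: "\<And>x y. x \<in> carrier G \<Longrightarrow> y \<in> carrier G \<Longrightarrow> y \<otimes> inv x \<in> N \<Longrightarrow>
      \<tau> y = \<tau> x"
  shows "(\<lambda>x\<in>carrier G. x \<otimes> \<tau> x) \<in> cay_aut G S"
proof -
  interpret N: subgroup N G by fact
  define f where "f = (\<lambda>x\<in>carrier G. x \<otimes> \<tau> x)"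
  have \<tau>_N: "\<tau> x \<in> N" "inv (\<tau> x) \<in> N" if "x \<in> carrier G" for x
    using \<tau> that by auto
  then have \<tau>_carrier: "\<tau> x \<in> carrier G" "inv (\<tau> x) \<in> carrier G" if "x \<in> carrier G" for x
    using that by auto
  have \<tau>_shift: "\<tau> (x \<otimes> n) = \<tau> x" if "x \<in> carrier G" "n \<in> N" for x n
  proof (rule \<tau>_coset)
    have "x \<otimes> n \<otimes> inv x = x \<otimes> (inv x \<otimes> n)"
      using central[of n "inv x"] that by (simp add: m_assoc)
    then show "x \<otimes> n \<otimes> inv x \<in> N"
      using that by (simp add: m_assoc[symmetric])
  qed (use that in auto)
  have bij: "f \<in> Bij (carrier G)"
    unfolding f_def using N \<tau> \<tau>_shift by (rule twist_Bij)
  have quotient: "f y \<otimes> inv (f x) = (y \<otimes> inv x) \<otimes> (\<tau> y \<otimes> inv (\<tau> x))"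
    if "x \<in> carrier G" "y \<in> carrier G" for x y
  proof -
    have "f y \<otimes> inv (f x) = y \<otimes> ((\<tau> y \<otimes> inv (\<tau> x)) \<otimes> inv x)"
      using that \<tau>_carrier by (simp add: f_def inv_mult_group m_assoc)
    also have "\<dots> = (y \<otimes> inv x) \<otimes> (\<tau> y \<otimes> inv (\<tau> x))"
      using that \<tau>_N \<tau>_carrier central[of "\<tau> y \<otimes> inv (\<tau> x)" "inv x"] by (simp add: m_assoc)
    finally show ?thesis .
  qed
  have arc: "y \<otimes> inv x \<in> S \<longleftrightarrow> f y \<otimes> inv (f x) \<in> S"
    if x: "x \<in> carrier G" and y: "y \<in> carrier G" for x y
  proof (cases "y \<otimes> inv x \<in> N")
    case True
    then show ?thesis using quotient[OF x y] \<tau>_coset[OF x y] \<tau>_carrier x y by simp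
  next
    case False
    have "\<tau> y \<otimes> inv (\<tau> x) \<in> N" using \<tau>_N x y by blast
    then show ?thesis
      using quotient[OF x y] mult_mem_iff_of_coset_closed[OF N S_N _ False] x y by simp
  qed
  have "f \<in> cay_aut G S"
    unfolding cay_aut_def
  proof (intro CollectI conjI ballI bij)
    fix x y assume "x \<in> carrier G" "y \<in> carrier G"
    moreover have "f x \<in> carrier G" "f y \<in> carrier G"
      using calculation bij by (auto simp: Bij_def bij_betw_def)
    ultimately show "(\<exists>s\<in>S. y = s \<otimes> x) = (\<exists>s\<in>S. f y = s \<otimes> f x)"
      using arc arc_iff_mult_inv_mem[OF S] by simp
  qed
  then show ?thesis by (simp add: f_def)
qed

lemma (in group) not_DRR_of_central_subgroup:
  assumes N: "subgroup N G"
    and central: "\<And>n x. n \<in> N \<Longrightarrow> x \<in> carrier G \<Longrightarrow> n \<otimes> x = x \<otimes> n"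
    and S: "S \<subseteq> carrier G" and S_N: "\<And>s n. s \<in> S - N \<Longrightarrow> n \<in> N \<Longrightarrow> s \<otimes> n \<in> S"
    and x\<^sub>0: "x\<^sub>0 \<in> carrier G" "x\<^sub>0 \<notin> N" and t: "t \<in> N" "t \<noteq> \<one>"
  shows "\<not> is_DRR G S"
proof
  interpret N: subgroup N G by fact
  define \<tau> where "\<tau> x = (if x \<otimes> inv x\<^sub>0 \<in> N then t else \<one>)" for x
  define f where "f = (\<lambda>x\<in>carrier G. x \<otimes> \<tau> x)"
  have "f \<in> cay_aut G S"
    unfolding f_def
  proof (rule central_twist_in_cay_aut[OF N central S S_N])
    show "\<tau> \<in> carrier G \<rightarrow> N" using t by (auto simp: \<tau>_def)
    fix x y assume x: "x \<in> carrier G" and y: "y \<in> carrier G" and yx: "y \<otimes> inv x \<in> N"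
    have "y \<otimes> inv x\<^sub>0 = (y \<otimes> inv x) \<otimes> (x \<otimes> inv x\<^sub>0)"
      and "x \<otimes> inv x\<^sub>0 = inv (y \<otimes> inv x) \<otimes> (y \<otimes> inv x\<^sub>0)"
      using x y x\<^sub>0 by (simp_all add: m_assoc inv_mult_group) (simp_all add: m_assoc[symmetric])
    then have "y \<otimes> inv x\<^sub>0 \<in> N \<longleftrightarrow> x \<otimes> inv x\<^sub>0 \<in> N"
      using yx by (metis N.m_closed N.m_inv_closed)
    then show "\<tau> y = \<tau> x" by (simp add: \<tau>_def)
  qed
  moreover assume "is_DRR G S"
  ultimately obtain g where g: "g \<in> carrier G" "f = (\<lambda>x\<in>carrier G. x \<otimes> g)"
    by (auto simp: is_DRR_def right_regular_def)
  have "inv x\<^sub>0 \<notin> N" using x\<^sub>0 N.m_inv_closed by fastforce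
  then have "f \<one> = \<one>" using x\<^sub>0 by (simp add: f_def \<tau>_def)
  then have "g = \<one>" using g by simp
  moreover have "f x\<^sub>0 = x\<^sub>0 \<otimes> t" using x\<^sub>0 by (simp add: f_def \<tau>_def)
  ultimately have "x\<^sub>0 \<otimes> t = x\<^sub>0 \<otimes> \<one>" using g x\<^sub>0 by simp
  then show False using x\<^sub>0 t by simp
qed

lemma (in group) not_DRR_detectingI:
  assumes S: "S \<subseteq> carrier G"
    and rigid: "\<And>\<phi> x. \<phi> \<in> auto G \<Longrightarrow> \<phi> ` S = S \<Longrightarrow> x \<in> carrier G \<Longrightarrow> \<phi> x = x"
    and not_DRR: "\<not> is_DRR G S"
  shows "\<not> DRR_detecting G"
proof -
  have "\<phi> = (\<lambda>x\<in>carrier G. x)" if "\<phi> \<in> aut_stab G S" for \<phi>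
  proof -
    have "\<phi> \<in> auto G" "\<phi> ` S = S" "\<phi> \<in> extensional (carrier G)"
      using that by (auto simp: aut_stab_def auto_def Bij_def)
    then show ?thesis using rigid by (auto simp: extensional_def)
  qed
  then have "aut_stab G S = {(\<lambda>x\<in>carrier G. x)}"
    using id_in_auto S by (auto simp: aut_stab_def)
  then show ?thesis using S not_DRR by (auto simp: DRR_detecting_def)
qed

lemma (in group) group_hom_of_auto: "\<phi> \<in> auto G \<Longrightarrow> group_hom G G \<phi>"
  by (simp add: auto_def group_hom_def group_hom_axioms_def)

lemma (in group) auto_fixes_generate:
  assumes \<phi>: "\<phi> \<in> auto G" and K: "K \<subseteq> carrier G" and fixed: "\<And>k. k \<in> K \<Longrightarrow> \<phi> k = k"
    and x: "x \<in> generate G K"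
  shows "\<phi> x = x"
proof -
  interpret group_hom G G \<phi> using \<phi> by (rule group_hom_of_auto)
  from x show ?thesis
  proof (induction x rule: generate.induct)
    case (inv h)
    then show ?case using K fixed by auto
  next
    case (eng h1 h2)
    then show ?case using K generate_in_carrier by simp
  qed (use fixed in auto)
qed

locale central_witness = group +
  fixes c :: 'a and K :: "'a set"
  assumes c_closed: "c \<in> carrier G"
    and c_central: "x \<in> carrier G \<Longrightarrow> c \<otimes> x = x \<otimes> c"
    and ord_c_gt_1: "1 < ord c"
    and K_closed: "K \<subseteq> carrier G"
    and K_nonempty: "K \<noteq> {}"
    and generated: "generate G (insert c K) = carrier G"
    and one_notin_K: "\<one> \<notin> K"
    and coprime_ord_K: "x \<in> K \<Longrightarrow> coprime (ord x) (ord c)"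
    and ord_K_separated: "x \<in> K \<Longrightarrow> y \<in> K \<Longrightarrow> ord y dvd ord x * ord c \<Longrightarrow> y = x"
begin

abbreviation N :: "'a set" where "N \<equiv> generate G {c}"

definition witness_set :: "'a set" where
  "witness_set = insert c (K <#> N)"

lemma N_subgroup: "subgroup N G"
  using c_closed by (simp add: generate_is_subgroup)

lemma N_closed: "N \<subseteq> carrier G"
  using c_closed by (simp add: generate_incl)

lemma c_in_N: "c \<in> N"
  by (simp add: generate.incl)

lemma N_central: "n \<in> N \<Longrightarrow> x \<in> carrier G \<Longrightarrow> n \<otimes> x = x \<otimes> n"
proof (induction n arbitrary: x rule: generate.induct)
  case (incl h)
  then show ?case using c_central by simp
next
  case (inv h)
  then have "inv c \<otimes> x = inv c \<otimes> (x \<otimes> c) \<otimes> inv c"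
    using c_closed by (simp add: m_assoc)
  also have "\<dots> = inv c \<otimes> (c \<otimes> x) \<otimes> inv c"
    using inv c_central by simp
  also have "\<dots> = x \<otimes> inv c"
    using inv c_closed by (simp add: m_assoc[symmetric])
  finally show ?case using inv by simp
next
  case (eng h1 h2)
  have "h1 \<in> carrier G" "h2 \<in> carrier G" using eng.hyps N_closed by blast+
  then have "h1 \<otimes> h2 \<otimes> x = h1 \<otimes> (x \<otimes> h2)"
    using eng.IH(2)[OF eng.prems] eng.prems by (simp add: m_assoc)
  also have "\<dots> = x \<otimes> (h1 \<otimes> h2)"
    using \<open>h1 \<in> carrier G\<close> \<open>h2 \<in> carrier G\<close> eng.IH(1)[OF eng.prems] eng.prems
    by (simp add: m_assoc[symmetric])
  finally show ?case .
qed simp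

lemma N_pow_ord_c: "n \<in> N \<Longrightarrow> n [^] ord c = \<one>"
proof -
  assume "n \<in> N"
  then obtain k :: int where "n = c [^] k" using generate_pow[OF c_closed] by blast
  then have "n [^] ord c = c [^] (k * int (ord c))"
    using c_closed by (simp add: int_pow_pow flip: int_pow_int)
  then show ?thesis using c_closed by (simp add: int_pow_eq_id)
qed

lemma pow_mult_N:
  assumes "x \<in> carrier G" "n \<in> N"
  shows "(x \<otimes> n) [^] (k::nat) = x [^] k \<otimes> n [^] k"
proof -
  have "n \<in> carrier G" using assms(2) N_closed by blast
  then show ?thesis using pow_mult_distrib[of x n] N_central[of n x] assms by simp
qed

lemma K_pow_ord_c_ne_one: "x \<in> K \<Longrightarrow> x [^] ord c \<noteq> \<one>"
proof
  assume x: "x \<in> K" and pow: "x [^] ord c = \<one>"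
  have x_closed: "x \<in> carrier G" using x K_closed by blast
  then have "ord x dvd ord c" using pow pow_eq_id by simp
  then have "ord x = 1" using coprime_common_divisor_nat[OF coprime_ord_K[OF x] dvd_refl] by simp
  then show False using x x_closed one_notin_K ord_eq_1 by simp
qed

lemma K_disjoint_N: "x \<in> K \<Longrightarrow> x \<notin> N"
  by (metis K_pow_ord_c_ne_one N_pow_ord_c)

lemma witness_set_closed: "witness_set \<subseteq> carrier G"
  using c_closed K_closed N_closed by (auto simp: witness_set_def set_mult_def)

lemma not_DRR_witness_set: "\<not> is_DRR G witness_set"
proof -
  obtain x\<^sub>0 where "x\<^sub>0 \<in> K" using K_nonempty by blast
  moreover have "c \<noteq> \<one>" using ord_c_gt_1 ord_eq_1 c_closed by force
  moreover have "s \<otimes> n \<in> witness_set" if s: "s \<in> witness_set - N" and n: "n \<in> N" for s n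
  proof -
    obtain x n' where x: "x \<in> K" and n': "n' \<in> N" and "s = x \<otimes> n'"
      using s c_in_N by (auto simp: witness_set_def set_mult_def)
    then have "s \<otimes> n = x \<otimes> (n' \<otimes> n)"
      using n K_closed N_closed by (simp add: m_assoc subsetD)
    then show ?thesis
      using x generate.eng[OF n' n] by (auto simp: witness_set_def set_mult_def)
  qed
  ultimately show ?thesis
    using not_DRR_of_central_subgroup[OF N_subgroup N_central witness_set_closed]
      K_disjoint_N K_closed c_in_N by blast
qed

lemma aut_fixes_c:
  assumes \<phi>: "\<phi> \<in> auto G" "\<phi> ` witness_set = witness_set"
  shows "\<phi> c = c"
proof (rule ccontr)
  interpret group_hom G G \<phi> using \<phi>(1) by (rule group_hom_of_auto)
  have "\<phi> c \<in> witness_set" using \<phi>(2) by (auto simp: witness_set_def)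
  moreover assume "\<phi> c \<noteq> c"
  ultimately obtain x n where x: "x \<in> K" and n: "n \<in> N" and \<phi>_c: "\<phi> c = x \<otimes> n"
    by (auto simp: witness_set_def set_mult_def)
  have "\<phi> c [^] ord c = \<one>" using c_closed hom_nat_pow[of c "ord c"] by simp
  moreover have "(x \<otimes> n) [^] ord c = x [^] ord c"
    using x n K_closed pow_mult_N N_pow_ord_c by (simp add: subsetD)
  ultimately show False using x \<phi>_c K_pow_ord_c_ne_one by simp
qed

lemma aut_fixes_K:
  assumes \<phi>: "\<phi> \<in> auto G" "\<phi> ` witness_set = witness_set" and x: "x \<in> K"
  shows "\<phi> x = x"
proof -
  interpret group_hom G G \<phi> using \<phi>(1) by (rule group_hom_of_auto)
  have x_closed: "x \<in> carrier G" using x K_closed by blast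
  have "x \<otimes> \<one> \<in> K <#> N" using x generate.one by (auto simp: set_mult_def)
  then have "\<phi> x \<in> witness_set" using \<phi>(2) x_closed by (auto simp: witness_set_def)
  moreover have "\<phi> x \<noteq> c"
  proof
    assume "\<phi> x = c"
    then have "\<phi> x = \<phi> c" using aut_fixes_c[OF \<phi>(1,2)] by simp
    then have "x = c" using \<phi>(1) x_closed c_closed by (auto simp: auto_def Bij_def bij_betw_def inj_on_def)
    then show False using x K_disjoint_N c_in_N by blast
  qed
  ultimately obtain y n where y: "y \<in> K" and n: "n \<in> N" and \<phi>_x: "\<phi> x = y \<otimes> n"
    by (auto simp: witness_set_def set_mult_def)
  have y_closed: "y \<in> carrier G" and n_closed: "n \<in> carrier G"
    using y n K_closed N_closed by auto
  have "(y \<otimes> n) [^] ord x = \<one>"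
    using \<phi>_x x_closed hom_nat_pow[of x "ord x"] by simp
  then have pow_ord_x: "y [^] ord x \<otimes> n [^] ord x = \<one>"
    using y_closed n pow_mult_N by simp
  have "(y \<otimes> n) [^] (ord x * ord c) = \<one>"
    using \<open>(y \<otimes> n) [^] ord x = \<one>\<close> y_closed n_closed by (simp add: nat_pow_pow[symmetric])
  moreover have "n [^] (ord x * ord c) = \<one>"
    using N_pow_ord_c[OF n] n_closed by (simp add: nat_pow_pow[symmetric] mult.commute)
  ultimately have "y [^] (ord x * ord c) = \<one>"
    using y_closed n pow_mult_N by simp
  then have "y = x" using ord_K_separated[OF x y] y_closed pow_eq_id by blast
  then have "n [^] ord x = \<one>" using pow_ord_x x_closed n_closed by simp
  then have "ord n dvd ord x" "ord n dvd ord c"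
    using N_pow_ord_c[OF n] n_closed by (simp_all add: pow_eq_id)
  then have "n = \<one>"
    using coprime_common_divisor_nat[OF coprime_ord_K[OF x]] n_closed ord_eq_1 by blast
  then show ?thesis using \<phi>_x \<open>y = x\<close> x_closed by simp
qed

theorem not_DRR_detecting: "\<not> DRR_detecting G"
proof (rule not_DRR_detectingI[OF witness_set_closed _ not_DRR_witness_set])
  fix \<phi> x assume \<phi>: "\<phi> \<in> auto G" "\<phi> ` witness_set = witness_set" and x: "x \<in> carrier G"
  have "insert c K \<subseteq> carrier G" using c_closed K_closed by blast
  moreover have "\<phi> k = k" if "k \<in> insert c K" for k
    using that aut_fixes_c[OF \<phi>] aut_fixes_K[OF \<phi>] by blast
  ultimately show "\<phi> x = x"
    using auto_fixes_generate[OF \<phi>(1)] x generated by blast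
qed

end

lemma iso_ord:
  assumes G: "group G" and H: "group H" and h: "h \<in> iso G H" and x: "x \<in> carrier G"
  shows "group.ord H (h x) = group.ord G x"
proof -
  interpret G: group G by fact
  interpret H: group H by fact
  interpret group_hom G H h using h by (simp add: group_hom_def group_hom_axioms_def iso_def)
  have inj: "inj_on h (carrier G)" using h by (simp add: iso_def bij_betw_def)
  have "h x [^]\<^bsub>H\<^esub> n = \<one>\<^bsub>H\<^esub> \<longleftrightarrow> x [^]\<^bsub>G\<^esub> n = \<one>\<^bsub>G\<^esub>" for n :: nat
  proof -
    have "h x [^]\<^bsub>H\<^esub> n = h (x [^]\<^bsub>G\<^esub> n)" using x by (simp add: hom_nat_pow)
    moreover have "h (x [^]\<^bsub>G\<^esub> n) = h \<one>\<^bsub>G\<^esub> \<longleftrightarrow> x [^]\<^bsub>G\<^esub> n = \<one>\<^bsub>G\<^esub>"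
      using inj_on_eq_iff[OF inj G.nat_pow_closed[OF x] G.one_closed] by simp
    ultimately show ?thesis by simp
  qed
  then show ?thesis using H.ord_unique x G.pow_eq_id by simp
qed

lemma central_witness_iso:
  assumes W: "central_witness G c K" and H: "group H" and h: "h \<in> iso G H"
  shows "central_witness H (h c) (h ` K)"
proof -
  interpret central_witness G c K by fact
  interpret H: group H by fact
  interpret group_hom G H h using h by (simp add: group_hom_def group_hom_axioms_def iso_def)
  have ord_h: "H.ord (h x) = ord x" if "x \<in> carrier G" for x
    using iso_ord[OF is_group H h that] .
  have inj: "inj_on h (carrier G)" and surj: "h ` carrier G = carrier H"
    using h by (auto simp: iso_def bij_betw_def)
  have K_ord_h: "H.ord (h x) = ord x" if "x \<in> K" for x
    using that K_closed ord_h by blast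
  show ?thesis
  proof unfold_locales
    show "h c \<in> carrier H" using c_closed by simp
    show "1 < H.ord (h c)" using ord_h[OF c_closed] ord_c_gt_1 by simp
    show "h ` K \<subseteq> carrier H" using K_closed by (simp add: image_subset_iff subsetD)
    show "h ` K \<noteq> {}" using K_nonempty by simp
    show "h c \<otimes>\<^bsub>H\<^esub> y = y \<otimes>\<^bsub>H\<^esub> h c" if y: "y \<in> carrier H" for y
    proof -
      obtain z where z: "z \<in> carrier G" "y = h z" using y surj by blast
      then show ?thesis using c_closed c_central[OF z(1)] by (simp flip: hom_mult)
    qed
    have "generate H (h ` insert c K) = h ` generate G (insert c K)"
      using c_closed K_closed by (intro generate_img) simp
    then show "generate H (insert (h c) (h ` K)) = carrier H"
      using generated surj by simp
    show "\<one>\<^bsub>H\<^esub> \<notin> h ` K"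
    proof
      assume "\<one>\<^bsub>H\<^esub> \<in> h ` K"
      then obtain x where x: "x \<in> K" "h x = h \<one>\<^bsub>G\<^esub>" by auto
      then have "x = \<one>\<^bsub>G\<^esub>" using inj_onD[OF inj x(2)] K_closed by blast
      then show False using x(1) one_notin_K by simp
    qed
    show "coprime (H.ord y) (H.ord (h c))" if "y \<in> h ` K" for y
    proof -
      obtain x where "x \<in> K" "y = h x" using \<open>y \<in> h ` K\<close> by blast
      then show ?thesis using coprime_ord_K K_ord_h ord_h[OF c_closed] by simp
    qed
    show "y' = x'"
      if x': "x' \<in> h ` K" and y': "y' \<in> h ` K" and dvd: "H.ord y' dvd H.ord x' * H.ord (h c)"
      for x' y'
    proof -
      obtain x y where "x \<in> K" "x' = h x" "y \<in> K" "y' = h y" using x' y' by blast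
      then show ?thesis using dvd ord_K_separated[of x y] K_ord_h ord_h[OF c_closed] by simp
    qed
  qed
qed

lemma (in group) exists_ord_eq_prime:
  assumes fin: "finite (carrier G)" and p: "Factorial_Ring.prime p" and dvd: "p dvd order G"
  shows "\<exists>x\<in>carrier G. ord x = p"
proof -
  have "order G = p ^ 1 * (order G div p)" using dvd by simp
  from sylow_thm[OF p is_group this fin] obtain H where H: "subgroup H G" "card H = p" by auto
  interpret H: subgroup H G by fact
  have "H \<noteq> {\<one>}" using H(2) p by (auto simp: prime_nat_iff)
  then obtain x where x: "x \<in> H" "x \<noteq> \<one>" using H.one_closed by blast
  have "group (G\<lparr>carrier := H\<rparr>)" using H(1) by (rule subgroup_imp_group)
  then have "x [^]\<^bsub>G\<lparr>carrier := H\<rparr>\<^esub> card H = \<one>"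
    using group.pow_order_eq_1[of "G\<lparr>carrier := H\<rparr>" x] x by (simp add: order_def)
  then have "x [^] p = \<one>" using H x nat_pow_consistent by simp
  then have "ord x dvd p" using x pow_eq_id by simp
  moreover have "ord x \<noteq> 1" using x ord_eq_1 by simp
  ultimately show ?thesis using x p by (auto simp: prime_nat_iff)
qed

lemma (in group) ord_dvd_of_pow_mult_eq_one:
  assumes x: "x \<in> carrier G" and y: "y \<in> carrier G" and pow: "x [^] d \<otimes> y [^] d = \<one>"
    and cop: "coprime (ord x) (ord y)"
  shows "ord x dvd d"
proof -
  have "x [^] d = inv (y [^] d)" using pow x y by (simp add: inv_equality)
  moreover have "(y [^] d) [^] ord y = \<one>"
    using y by (metis mult.commute nat_pow_one nat_pow_pow pow_ord_eq_1)
  ultimately have "x [^] (d * ord y) = \<one>"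
    using x y by (simp add: nat_pow_pow[symmetric] nat_pow_inv)
  then have "ord x dvd d * ord y" using x pow_eq_id by blast
  then show ?thesis using cop by (simp add: coprime_dvd_mult_left_iff)
qed

lemma (in group) ord_mult_of_coprime:
  assumes x: "x \<in> carrier G" and y: "y \<in> carrier G" and comm: "x \<otimes> y = y \<otimes> x"
    and cop: "coprime (ord x) (ord y)"
  shows "ord (x \<otimes> y) = ord x * ord y"
proof -
  let ?d = "ord (x \<otimes> y)"
  have "(x \<otimes> y) [^] ?d = \<one>" using x y by simp
  then have xy: "x [^] ?d \<otimes> y [^] ?d = \<one>" using pow_mult_distrib[OF comm x y] by simp
  then have yx: "y [^] ?d \<otimes> x [^] ?d = \<one>" using x y by (simp add: inv_comm)
  have "ord x dvd ?d" "ord y dvd ?d"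
    using ord_dvd_of_pow_mult_eq_one[OF x y xy] ord_dvd_of_pow_mult_eq_one[OF y x yx] cop
    by (simp_all add: coprime_commute)
  then have "ord x * ord y dvd ?d" using cop by (simp add: divides_mult)
  then show ?thesis using ord_mul_divides[OF comm x y] by (simp add: dvd_antisym)
qed

lemma (in comm_group) exists_ord_of_dvd_squarefree_order:
  assumes fin: "finite (carrier G)" and sq: "squarefree (order G)" and d: "d dvd order G"
  shows "\<exists>x\<in>carrier G. ord x = d"
  using d
proof (induction d rule: less_induct)
  case (less d)
  show ?case
  proof (cases "d = 1")
    case True
    then show ?thesis by (intro bexI[of _ \<one>]) auto
  next
    case False
    have "order G \<noteq> 0" using fin order_gt_0_iff_finite by simp
    then have "d \<noteq> 0" using less.prems by auto
    then obtain p where p: "Factorial_Ring.prime p" "p dvd d" using False prime_factor_nat by blast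
    then obtain e where e: "d = p * e" by (auto simp: dvd_def)
    have "e < d" using e p(1) \<open>d \<noteq> 0\<close> prime_gt_1_nat by simp
    moreover have "e dvd order G" using less.prems e dvd_mult_right by blast
    ultimately obtain y where y: "y \<in> carrier G" "ord y = e" using less.IH by blast
    have "p dvd order G" using p(2) less.prems by (rule dvd_trans)
    then obtain x where x: "x \<in> carrier G" "ord x = p" using exists_ord_eq_prime[OF fin p(1)] by blast
    have "coprime p e"
    proof (rule ccontr)
      assume "\<not> coprime p e"
      then have "p dvd e" using p(1) prime_imp_coprime by blast
      then have "p ^ 2 dvd d" using e by (simp add: power2_eq_square)
      then have "p ^ 2 dvd order G" using less.prems by (rule dvd_trans)
      then show False using squarefreeD[OF sq] p(1) not_prime_unit by blast
    qed
    then have "coprime (ord x) (ord y)" by (simp only: x(2) y(2))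
    then have "ord (x \<otimes> y) = ord x * ord y"
      by (rule ord_mult_of_coprime[OF x(1) y(1) m_comm[OF x(1) y(1)]])
    then have "ord (x \<otimes> y) = d" by (simp only: x(2) y(2) e)
    moreover have "x \<otimes> y \<in> carrier G" using x(1) y(1) by (rule m_closed)
    ultimately show ?thesis by blast
  qed
qed

lemma (in group) generate_eq_carrier_of_ord_eq_order:
  assumes fin: "finite (carrier G)" and g: "g \<in> carrier G" and ord_g: "ord g = order G"
  shows "generate G {g} = carrier G"
proof (rule card_subset_eq[OF fin])
  show "generate G {g} \<subseteq> carrier G" using g by (simp add: generate_incl)
  show "card (generate G {g}) = card (carrier G)"
    using generate_pow_card[OF g] ord_g by (simp add: order_def)
qed

lemma (in comm_group) not_DRR_detecting_of_squarefree_composite: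
  assumes fin: "finite (carrier G)" and sq: "squarefree (order G)"
    and composite: "1 < order G" "\<not> Factorial_Ring.prime (order G)"
  shows "\<not> DRR_detecting G"
proof -
  have "order G \<noteq> 1" using composite(1) by simp
  then obtain p where p: "Factorial_Ring.prime p" "p dvd order G" using prime_factor_nat by blast
  define m where "m = order G div p"
  have order_G: "order G = p * m" using p by (simp add: m_def)
  have "m \<noteq> 0" using composite(1) order_G by (metis mult_0_right not_less_zero)
  moreover have "m \<noteq> 1" using composite(2) order_G p(1) by (metis mult_1_right)
  ultimately have "1 < m" by linarith
  have "coprime p m"
  proof (rule ccontr)
    assume "\<not> coprime p m"
    then have "p dvd m" using p(1) prime_imp_coprime by blast
    then have "p ^ 2 dvd order G" using order_G by (simp add: power2_eq_square)
    then show False using squarefreeD[OF sq] p(1) not_prime_unit by blast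
  qed
  obtain c where c: "c \<in> carrier G" "ord c = p"
    using exists_ord_of_dvd_squarefree_order[OF fin sq p(2)] by blast
  have "m dvd order G" using order_G by simp
  then obtain x where x: "x \<in> carrier G" "ord x = m"
    using exists_ord_of_dvd_squarefree_order[OF fin sq] by blast
  have "coprime (ord c) (ord x)" using c(2) x(2) \<open>coprime p m\<close> by simp
  then have "ord (c \<otimes> x) = order G"
    using ord_mult_of_coprime[OF c(1) x(1) m_comm[OF c(1) x(1)]] c(2) x(2) order_G by simp
  then have "generate G {c \<otimes> x} = carrier G"
    by (rule generate_eq_carrier_of_ord_eq_order[OF fin m_closed[OF c(1) x(1)]])
  have generated: "generate G {c, x} = carrier G"
  proof
    show "generate G {c, x} \<subseteq> carrier G" using c x by (simp add: generate_incl)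
    have "c \<otimes> x \<in> generate G {c, x}" by (simp add: generate.eng generate.incl)
    then have "generate G {c \<otimes> x} \<subseteq> generate G {c, x}"
      using c x by (simp add: generate_subgroup_incl generate_is_subgroup)
    then show "carrier G \<subseteq> generate G {c, x}" using \<open>generate G {c \<otimes> x} = carrier G\<close> by simp
  qed
  have "central_witness G c {x}"
  proof unfold_locales
    show "c \<in> carrier G" "{x} \<subseteq> carrier G" "{x} \<noteq> {}" using c x by simp_all
    show "c \<otimes> y = y \<otimes> c" if "y \<in> carrier G" for y using c(1) that by (rule m_comm)
    show "1 < ord c" using c p(1) prime_gt_1_nat by simp
    show "generate G (insert c {x}) = carrier G" using generated .
    show "\<one> \<notin> {x}" using x \<open>1 < m\<close> by auto
    show "coprime (ord y) (ord c)" if "y \<in> {x}" for y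
      using that x c \<open>coprime p m\<close> by (simp add: coprime_commute)
    show "y = x'" if "x' \<in> {x}" "y \<in> {x}" for x' y using that by simp
  qed
  then show ?thesis by (rule central_witness.not_DRR_detecting)
qed

lemma carrier_dihedral_group: "carrier (dihedral_group n) = {0..<int n} \<times> {0..<2}"
  by (simp add: dihedral_group_def)

lemma one_dihedral_group [simp]: "\<one>\<^bsub>dihedral_group n\<^esub> = (0, 0)"
  by (simp add: dihedral_group_def)

lemma mult_dihedral_group [simp]:
  "(a, i) \<otimes>\<^bsub>dihedral_group n\<^esub> (b, j) = ((a + (-1) ^ nat i * b) mod int n, (i + j) mod 2)"
  by (simp add: dihedral_group_def)

lemma dihedral_group_group:
  assumes n: "0 < n"
  shows "group (dihedral_group n)"
proof (rule groupI)
  have bit: "i = 0 \<or> i = 1" if "(a, i) \<in> carrier (dihedral_group n)" for a i :: int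
    using that by (auto simp: carrier_dihedral_group)
  fix x y z
  assume x: "x \<in> carrier (dihedral_group n)"
  then obtain a i where ai: "x = (a, i)" "0 \<le> a" "a < int n" and i: "i = 0 \<or> i = 1"
    using bit by (cases x) (auto simp: carrier_dihedral_group)
  show "\<one>\<^bsub>dihedral_group n\<^esub> \<otimes>\<^bsub>dihedral_group n\<^esub> x = x"
    using ai i by auto
  show "\<exists>y\<in>carrier (dihedral_group n). y \<otimes>\<^bsub>dihedral_group n\<^esub> x = \<one>\<^bsub>dihedral_group n\<^esub>"
  proof (cases "i = 0")
    case True
    show ?thesis
      by (rule bexI[of _ "((- a) mod int n, 0)"]) (use ai True n in \<open>auto simp: carrier_dihedral_group mod_simps\<close>)
  next
    case False
    show ?thesis
      by (rule bexI[of _ "(a, 1)"]) (use ai i False in \<open>auto simp: carrier_dihedral_group\<close>)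
  qed
  assume y: "y \<in> carrier (dihedral_group n)" and z: "z \<in> carrier (dihedral_group n)"
  then obtain b j c k where "y = (b, j)" "z = (c, k)" "j = 0 \<or> j = 1" "k = 0 \<or> k = 1"
    using bit by (cases y, cases z) blast
  then show "x \<otimes>\<^bsub>dihedral_group n\<^esub> y \<otimes>\<^bsub>dihedral_group n\<^esub> z =
      x \<otimes>\<^bsub>dihedral_group n\<^esub> (y \<otimes>\<^bsub>dihedral_group n\<^esub> z)"
    using ai i by (elim disjE) (simp_all add: mod_simps algebra_simps)
next
  fix x y assume "x \<in> carrier (dihedral_group n)" "y \<in> carrier (dihedral_group n)"
  then show "x \<otimes>\<^bsub>dihedral_group n\<^esub> y \<in> carrier (dihedral_group n)"
    using n by (auto simp: carrier_dihedral_group)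
next
  show "\<one>\<^bsub>dihedral_group n\<^esub> \<in> carrier (dihedral_group n)"
    using n by (simp add: carrier_dihedral_group)
qed

lemma pow_dihedral_group_rotation: "(a, 0) [^]\<^bsub>dihedral_group n\<^esub> k = (int k * a mod int n, 0)"
  by (induction k) (simp_all add: mod_simps algebra_simps)

lemma pow_dihedral_group_reflection: "(0, 1) [^]\<^bsub>dihedral_group n\<^esub> k = (0, int k mod 2)"
  by (induction k) (simp_all add: mod_simps algebra_simps)

lemma pow_DirProd: "(g, h) [^]\<^bsub>G \<times>\<times> H\<^esub> (k::nat) = (g [^]\<^bsub>G\<^esub> k, h [^]\<^bsub>H\<^esub> k)"
  by (induction k) simp_all

abbreviation dihedral_cyclic :: "nat \<Rightarrow> nat \<Rightarrow> ((int \<times> int) \<times> int) monoid" where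
  "dihedral_cyclic r q \<equiv> dihedral_group r \<times>\<times> cyclic_group q"

lemma group_dihedral_cyclic: "0 < r \<Longrightarrow> group (dihedral_cyclic r q)"
  by (simp add: DirProd_group dihedral_group_group cyclic_group_def)

lemma carrier_cyclic_group: "0 < q \<Longrightarrow> carrier (cyclic_group q) = {0..<int q}"
  by (simp add: cyclic_group_def carrier_integer_mod_group)

lemma order_dihedral_cyclic: "0 < q \<Longrightarrow> order (dihedral_cyclic r q) = r * 2 * q"
  by (simp add: order_def carrier_dihedral_group carrier_cyclic_group card_cartesian_product)

lemma pow_dihedral_cyclic:
  "((1, 0), 0) [^]\<^bsub>dihedral_cyclic r q\<^esub> n = ((int n mod int r, 0), 0)"
  "((0, 1), 0) [^]\<^bsub>dihedral_cyclic r q\<^esub> n = ((0, int n mod 2), 0)"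
  "((0, 0), 1) [^]\<^bsub>dihedral_cyclic r q\<^esub> n = ((0, 0), int n mod int q)"
  using pow_dihedral_group_rotation[where a = 0 and n = r and k = n]
  by (simp_all add: pow_DirProd pow_dihedral_group_rotation pow_dihedral_group_reflection
      cyclic_group_def)

lemma ord_dihedral_cyclic:
  assumes r: "1 < r" and q: "1 < q"
  shows "group.ord (dihedral_cyclic r q) ((1, 0), 0) = r"
    and "group.ord (dihedral_cyclic r q) ((0, 1), 0) = 2"
    and "group.ord (dihedral_cyclic r q) ((0, 0), 1) = q"
proof -
  interpret D: group "dihedral_cyclic r q" using r by (simp add: group_dihedral_cyclic)
  have closed: "((1, 0), 0) \<in> carrier (dihedral_cyclic r q)" "((0, 1), 0) \<in> carrier (dihedral_cyclic r q)"
    "((0, 0), 1) \<in> carrier (dihedral_cyclic r q)"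
    using r q by (simp_all add: carrier_dihedral_group carrier_cyclic_group)
  show "D.ord ((1, 0), 0) = r"
    unfolding D.ord_unique[OF closed(1)] pow_dihedral_cyclic
    by (simp add: cyclic_group_def dvd_eq_mod_eq_0 flip: of_nat_mod)
  show "D.ord ((0, 1), 0) = 2"
    unfolding D.ord_unique[OF closed(2)] pow_dihedral_cyclic by (simp add: cyclic_group_def) presburger
  show "D.ord ((0, 0), 1) = q"
    unfolding D.ord_unique[OF closed(3)] pow_dihedral_cyclic
    by (simp add: cyclic_group_def dvd_eq_mod_eq_0 flip: of_nat_mod)
qed

lemma generate_dihedral_cyclic:
  assumes r: "1 < r" and q: "1 < q"
  shows "generate (dihedral_cyclic r q) {((0, 0), 1), ((1, 0), 0), ((0, 1), 0)} = carrier (dihedral_cyclic r q)"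
    (is "generate ?D ?K = carrier ?D")
proof
  interpret D: group ?D using r by (simp add: group_dihedral_cyclic)
  have K: "?K \<subseteq> carrier ?D" using r q by (simp add: carrier_dihedral_group carrier_cyclic_group)
  then show "generate ?D ?K \<subseteq> carrier ?D" by (rule D.generate_incl)
  have pow_mem: "y [^]\<^bsub>?D\<^esub> n \<in> generate ?D ?K" if "y \<in> ?K" for y and n :: nat
    using D.subgroup_int_pow_closed[OF D.generate_is_subgroup[OF K] generate.incl[OF that], of "int n"]
    by (simp add: int_pow_int)
  show "carrier ?D \<subseteq> generate ?D ?K"
  proof
    fix x assume "x \<in> carrier ?D"
    then obtain a i k where x: "x = ((a, i), k)" and a: "0 \<le> a" "a < int r"
      and i: "0 \<le> i" "i < 2" and k: "0 \<le> k" "k < int q"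
      using q by (auto simp: carrier_dihedral_group carrier_cyclic_group)
    have "x = ((1, 0), 0) [^]\<^bsub>?D\<^esub> nat a \<otimes>\<^bsub>?D\<^esub> ((0, 1), 0) [^]\<^bsub>?D\<^esub> nat i
        \<otimes>\<^bsub>?D\<^esub> ((0, 0), 1) [^]\<^bsub>?D\<^esub> nat k"
      unfolding pow_dihedral_cyclic using x a i k by (simp add: cyclic_group_def)
    then show "x \<in> generate ?D ?K" using pow_mem by (simp add: generate.eng)
  qed
qed

lemma dihedral_cyclic_central_witness:
  fixes r q :: nat
  assumes r: "odd r" "1 < r" and q: "odd q" "1 < q" and cop: "coprime r q"
  shows "central_witness (dihedral_cyclic r q) ((0, 0), 1) {((1, 0), 0), ((0, 1), 0)}"
    (is "central_witness ?D ?c {?a, ?b}")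
proof -
  interpret D: group ?D using r by (simp add: group_dihedral_cyclic)
  note ord = ord_dihedral_cyclic[OF r(2) q(2)]
  have "\<not> 2 dvd r * q" using r q by simp
  have "\<not> r dvd 2 * q"
  proof
    assume "r dvd 2 * q"
    then have "r dvd 2" using cop by (simp add: coprime_dvd_mult_left_iff)
    then have "r \<le> 2" by (rule dvd_imp_le) simp
    then show False using r by presburger
  qed
  show ?thesis
  proof unfold_locales
    show "?c \<in> carrier ?D" "{?a, ?b} \<subseteq> carrier ?D" "{?a, ?b} \<noteq> {}"
      using r q by (simp_all add: carrier_dihedral_group carrier_cyclic_group)
    show "?c \<otimes>\<^bsub>?D\<^esub> x = x \<otimes>\<^bsub>?D\<^esub> ?c" if "x \<in> carrier ?D" for x
      using that q by (auto simp: carrier_dihedral_group carrier_cyclic_group cyclic_group_def add.commute)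
    show "1 < D.ord ?c" using ord q by simp
    show "generate ?D (insert ?c {?a, ?b}) = carrier ?D"
      using generate_dihedral_cyclic[OF r(2) q(2)] by simp
    show "\<one>\<^bsub>?D\<^esub> \<notin> {?a, ?b}" by (simp add: cyclic_group_def)
    show "coprime (D.ord y) (D.ord ?c)" if "y \<in> {?a, ?b}" for y
      using that ord cop q by auto
    show "y = x" if "x \<in> {?a, ?b}" "y \<in> {?a, ?b}" "D.ord y dvd D.ord x * D.ord ?c" for x y
      using that ord \<open>\<not> 2 dvd r * q\<close> \<open>\<not> r dvd 2 * q\<close> by auto
  qed
qed

lemma not_DRR_detecting_of_iso_dihedral_cyclic:
  fixes R :: "('a, 'b) monoid_scheme" and r q :: nat
  assumes R: "group R" and iso: "R \<cong> dihedral_cyclic r q"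
    and rq: "odd r" "1 < r" "odd q" "1 < q" "coprime r q"
  shows "\<not> DRR_detecting R"
proof -
  obtain h where h: "h \<in> iso (dihedral_cyclic r q) R"
    using group.iso_sym[OF R iso] by (auto simp: is_iso_def)
  have "central_witness R (h ((0, 0), 1)) (h ` {((1, 0), 0), ((0, 1), 0)})"
    by (rule central_witness_iso[OF dihedral_cyclic_central_witness[OF rq] R h])
  then show ?thesis by (rule central_witness.not_DRR_detecting)
qed

lemma odd_distinct_of_squarefree:
  fixes r q :: nat
  assumes sq: "squarefree (r * 2 * q)" and r: "Factorial_Ring.prime r" and q: "Factorial_Ring.prime q"
  shows "odd r" "odd q" "r \<noteq> q"
proof -
  have square_free: "x = 1" if "x ^ 2 dvd r * 2 * q" for x
    using squarefreeD[OF sq] that by simp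
  have "r \<noteq> 2" "q \<noteq> 2" "r \<noteq> q"
    using square_free[of 2] square_free[of r] r by (auto simp: power2_eq_square)
  then show "odd r" "odd q" "r \<noteq> q"
    using prime_odd_nat prime_ge_2_nat r q by (auto simp: order.order_iff_strict)
qed

theorem corollary4p6:
  fixes R :: "('a, 'b) monoid_scheme"
  assumes "group R" and "finite (carrier R)" and "squarefree (order R)"
    and "(comm_group R \<and> order R > 1 \<and> \<not> Factorial_Ring.prime (order R))
         \<or> (\<exists>r q::nat. r \<in> {3, 5} \<and> Factorial_Ring.prime q \<and>
              R \<cong> DirProd (dihedral_group r) (cyclic_group q))"
  shows "\<not> DRR_detecting R"
  using assms(4)
proof
  assume "comm_group R \<and> order R > 1 \<and> \<not> Factorial_Ring.prime (order R)"
  then show ?thesis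
    using comm_group.not_DRR_detecting_of_squarefree_composite assms(2,3) by blast
next
  assume "\<exists>r q::nat. r \<in> {3, 5} \<and> Factorial_Ring.prime q \<and>
              R \<cong> DirProd (dihedral_group r) (cyclic_group q)"
  then obtain r q :: nat where r: "r \<in> {3, 5}" and q: "Factorial_Ring.prime q"
    and iso: "R \<cong> dihedral_group r \<times>\<times> cyclic_group q" by blast
  have "order R = r * 2 * q"
    using iso_same_card[OF iso] order_dihedral_cyclic q prime_gt_0_nat
    by (simp add: order_def)
  moreover have r_prime: "Factorial_Ring.prime r" using r by auto
  ultimately have "odd r" "odd q" "r \<noteq> q"
    using odd_distinct_of_squarefree[OF _ r_prime q] assms(3) by simp_all
  moreover have "1 < r" "1 < q" using prime_gt_1_nat r_prime q by blast+
  moreover have "coprime r q" using primes_coprime[OF r_prime q] \<open>r \<noteq> q\<close> .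
  ultimately show ?thesis using not_DRR_detecting_of_iso_dihedral_cyclic[OF assms(1) iso] by blast
qed

end
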